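(* Suppose $\Xi=\{\boldsymbol{\xi}\in\mathbb{R}^m:(\boldsymbol{\xi}-\boldsymbol{\xi}_0)^{\top}\boldsymbol{W}^{-1}(\boldsymbol{\xi}-\boldsymbol{\xi}_0)\le1\}$ with $\boldsymbol{W}\succ0$, and $f_t(\boldsymbol{x},\boldsymbol{\xi})=\boldsymbol{w}_t(\boldsymbol{\xi})^{\top}\boldsymbol{x}$ for all $t\in[T]$, where each component is $w_{tj}(\boldsymbol{\xi})=\boldsymbol{\xi}^{\top}\boldsymbol{W}_{tj}\boldsymbol{\xi}+\boldsymbol{r}_{tj}^{\top}\boldsymbol{\xi}+h_{tj}$ with $\boldsymbol{W}_{tj}\succeq0$, $j\in[n]$. Set $\boldsymbol{W}_t(\boldsymbol{x})=\sum_{j=1}^nx_j\boldsymbol{W}_{tj}$, $\boldsymbol{R}_t(\boldsymbol{x})=\sum_{j=1}^nx_j\boldsymbol{r}_{tj}$, $H_t(\boldsymbol{x})=\sum_{j=1}^nx_jh_{tj}$. Let $\tilde Z_{C_2}$ be the set of $\boldsymbol{x}\in\mathbb{R}^n$ for which there exist $\alpha_t>0$, $q_{it}\ge0$, $\boldsymbol{v}_{it}\in\mathbb{R}^m$ ($i\in[N],t\in[T]$) with, for all $i,t$, $\|\boldsymbol{v}_{it}\|_*\delta+\frac1N\sum_{j=1}^Nq_{jt}\le\epsilon\alpha_t$ and $\sup_{\boldsymbol{\xi}\in\Xi}[\boldsymbol{v}_{it}^{\top}\boldsymbol{\xi}-f_t(\boldsymbol{x},\boldsymbol{\xi})]+\alpha_t-\boldsymbol{v}_{it}^{\top}\boldsymbol{\zeta}^i-q_{it}\le0$.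 Then $\tilde Z_{C_2}$ equals the set of $\boldsymbol{x}\in\mathbb{R}^n$ for which there exist $\alpha_t>0$, $q_{it}\ge0$, $\boldsymbol{v}_{it}\in\mathbb{R}^m$, $u_{it}\in\mathbb{R}$, $\nu_{it}\ge0$ such that for all $i\in[N],t\in[T]$: $$\|\boldsymbol{v}_{it}\|_*\delta+\frac1N\sum_{j=1}^Nq_{jt}\le\epsilon\alpha_t,\qquad u_{it}-H_t(\boldsymbol{x})+\alpha_t-\boldsymbol{v}_{it}^{\top}\boldsymbol{\zeta}^i\le q_{it},$$ $$\begin{bmatrix}\boldsymbol{W}_t(\boldsymbol{x})+\nu_{it}\boldsymbol{W}^{-1}&-\frac12(2\nu_{it}\boldsymbol{W}^{-1}\boldsymbol{\xi}_0+\boldsymbol{v}_{it}-\boldsymbol{R}_t(\boldsymbol{x}))\\-\frac12(2\nu_{it}\boldsymbol{W}^{-1}\boldsymbol{\xi}_0+\boldsymbol{v}_{it}-\boldsymbol{R}_t(\boldsymbol{x}))^{\top}&u_{it}+\nu_{it}\boldsymbol{\xi}_0^{\top}\boldsymbol{W}^{-1}\boldsymbol{\xi}_0-\nu_{it}\end{bmatrix}\succeq0.$$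
   Context: Setting: $\epsilon\in(0,1)$, $\delta>0$, $[T]=\{1,\dots,T\}$; $\boldsymbol{\zeta}^1,\dots,\boldsymbol{\zeta}^N\in\Xi$ given samples; $\|\cdot\|_*$ is the dual norm of a norm on $\mathbb{R}^m$; $\succeq0$ ($\succ0$) denotes positive semidefinite (definite). *)

theory Defs
  imports "HOL-Analysis.Analysis"
begin

definition psd :: "real^'k^'k \<Rightarrow> bool" where
  "psd A \<longleftrightarrow> transpose A = A \<and> (\<forall>y. 0 \<le> y \<bullet> (A *v y))"

definition pd :: "real^'k^'k \<Rightarrow> bool" where
  "pd A \<longleftrightarrow> transpose A = A \<and> (\<forall>y. y \<noteq> 0 \<longrightarrow> 0 < y \<bullet> (A *v y))"

text \<open>The (m+1)x(m+1) block matrix [A b; b^T c], indexed by 'm + unit.\<close>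
definition block_mat :: "real^'m^'m \<Rightarrow> real^'m \<Rightarrow> real \<Rightarrow> real^('m + unit)^('m + unit)" where
  "block_mat A b c = (\<chi> i j. (case i of
       Inl k \<Rightarrow> (case j of Inl l \<Rightarrow> A $ k $ l | Inr _ \<Rightarrow> b $ k)
     | Inr _ \<Rightarrow> (case j of Inl l \<Rightarrow> b $ l | Inr _ \<Rightarrow> c)))"

definition is_norm :: "(real^'m \<Rightarrow> real) \<Rightarrow> bool" where
  "is_norm nrm \<longleftrightarrow> (\<forall>x. nrm x = 0 \<longleftrightarrow> x = 0)
      \<and> (\<forall>c x. nrm (c *\<^sub>R x) = \<bar>c\<bar> * nrm x)
      \<and> (\<forall>x y. nrm (x + y) \<le> nrm x + nrm y)"

definition dual_norm :: "(real^'m \<Rightarrow> real) \<Rightarrow> real^'m \<Rightarrow> real" where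
  "dual_norm nrm v = Sup {v \<bullet> z | z. nrm z \<le> 1}"

definition ellipsoid :: "real^'m \<Rightarrow> real^'m^'m \<Rightarrow> (real^'m) set" where
  "ellipsoid xi0 W = {xi. (xi - xi0) \<bullet> (matrix_inv W *v (xi - xi0)) \<le> 1}"

definition wcomp :: "real^'m^'m \<Rightarrow> real^'m \<Rightarrow> real \<Rightarrow> real^'m \<Rightarrow> real" where
  "wcomp Wj rj hj xi = xi \<bullet> (Wj *v xi) + rj \<bullet> xi + hj"

definition fobj :: "(nat \<Rightarrow> 'n \<Rightarrow> real^'m^'m) \<Rightarrow> (nat \<Rightarrow> 'n \<Rightarrow> real^'m) \<Rightarrow> (nat \<Rightarrow> 'n \<Rightarrow> real)
    \<Rightarrow> nat \<Rightarrow> real^'n::finite \<Rightarrow> real^'m \<Rightarrow> real" where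
  "fobj Wc r h t x xi = (\<Sum>j\<in>UNIV. wcomp (Wc t j) (r t j) (h t j) xi * x $ j)"

definition Wt :: "(nat \<Rightarrow> 'n \<Rightarrow> real^'m^'m) \<Rightarrow> nat \<Rightarrow> real^'n::finite \<Rightarrow> real^'m^'m" where
  "Wt Wc t x = (\<Sum>j\<in>UNIV. x $ j *\<^sub>R Wc t j)"

definition Rt :: "(nat \<Rightarrow> 'n \<Rightarrow> real^'m) \<Rightarrow> nat \<Rightarrow> real^'n::finite \<Rightarrow> real^'m" where
  "Rt r t x = (\<Sum>j\<in>UNIV. x $ j *\<^sub>R r t j)"

definition Ht :: "(nat \<Rightarrow> 'n \<Rightarrow> real) \<Rightarrow> nat \<Rightarrow> real^'n::finite \<Rightarrow> real" where
  "Ht h t x = (\<Sum>j\<in>UNIV. x $ j * h t j)"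

end

(*
  Fix x and an index pair (i, t). With u = sup + H_t(x), the semi-infinite constraint says that
  the quadratic q(xi) = xi^T W_t(x) xi + (R_t(x) - v)^T xi + u is nonnegative on the ellipsoid
  g(xi) <= 1, where g(xi) = (xi - xi0)^T W^-1 (xi - xi0). By the S-lemma for a single
  ellipsoidal constraint this holds iff q + nu (g - 1) >= 0 on all of R^m for some nu >= 0, and
  that is exactly positive semidefiniteness of the block matrix.

  The S-lemma is proved through the optimality conditions of the trust-region problem: q attains
  its minimum on the compact ellipsoid at some xs, and there is a multiplier nu >= 0 with
  stationarity, complementary slackness and W_t(x) + nu W^-1 psd. Expanding q + nu (g - 1)
  around xs then shows it is nonnegative everywhere.
*)
theory Submission
  imports Defs
begin

section \<open>Quadratic forms and positive definite matrices\<close>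

lemma transpose_add: "transpose (A + B) = transpose A + transpose (B :: 'a::plus^'n^'m)"
  by (simp add: transpose_def vec_eq_iff)

lemma transpose_sum:
  "transpose (\<Sum>j\<in>S. f j) = (\<Sum>j\<in>S. transpose (f j :: 'a::comm_monoid_add^'n^'m))"
proof (induction S rule: infinite_finite_induct)
  case (infinite S)
  then show ?case by (simp add: transpose_def vec_eq_iff)
next
  case empty
  then show ?case by (simp add: transpose_def vec_eq_iff)
next
  case (insert j S)
  then show ?case by (simp add: transpose_add)
qed

lemma sum_matrix_vector_mult:
  "(\<Sum>j\<in>S. f j) *v x = (\<Sum>j\<in>S. f j *v (x :: 'a::comm_semiring_1^'n))"
  by (induction S rule: infinite_finite_induct) (simp_all add: matrix_vector_mult_add_rdistrib)

lemma inner_matrix_vector_symmetric: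
  fixes M :: "real^'n^'n"
  assumes "transpose M = M"
  shows "x \<bullet> (M *v y) = y \<bullet> (M *v x)"
proof -
  have "x \<bullet> (M *v y) = (transpose M *v x) \<bullet> y" by (simp add: dot_lmul_matrix)
  then show ?thesis using assms by (simp add: inner_commute)
qed

lemma quadratic_form_add:
  fixes M :: "real^'n^'n"
  assumes "transpose M = M"
  shows "(x + d) \<bullet> (M *v (x + d)) = x \<bullet> (M *v x) + 2 * ((M *v x) \<bullet> d) + d \<bullet> (M *v d)"
  using inner_matrix_vector_symmetric[OF assms, of x d]
  by (simp add: matrix_vector_right_distrib inner_add_left inner_add_right inner_commute)

lemma quadratic_form_add_matrix:
  "d \<bullet> ((A + c *\<^sub>R B) *v d) = d \<bullet> (A *v d) + c * (d \<bullet> (B *v (d :: real^'n)))"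
  by (simp add: matrix_vector_mult_add_rdistrib inner_add_right flip: scaleR_matrix_vector_assoc)

lemma pd_quadratic_form_lower_bound:
  fixes P :: "real^'n^'n"
  assumes "pd P"
  obtains l where "0 < l" "\<And>y. l * (norm y)\<^sup>2 \<le> y \<bullet> (P *v y)"
proof -
  have "continuous_on (sphere 0 1) (\<lambda>y::real^'n. y \<bullet> (P *v y))"
    by (intro continuous_intros matrix_vector_mult_linear_continuous_on)
  moreover have "sphere (0::real^'n) 1 \<noteq> {}" by simp
  ultimately obtain y0 where y0: "y0 \<in> sphere 0 1"
    and min: "\<And>y. y \<in> sphere 0 1 \<Longrightarrow> y0 \<bullet> (P *v y0) \<le> y \<bullet> (P *v y)"
    using continuous_attains_inf[OF compact_sphere] by blast
  show ?thesis
  proof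
    have "y0 \<noteq> 0" using y0 by auto
    then show "0 < y0 \<bullet> (P *v y0)" using assms by (simp add: pd_def)
  next
    fix y :: "real^'n"
    show "y0 \<bullet> (P *v y0) * (norm y)\<^sup>2 \<le> y \<bullet> (P *v y)"
    proof (cases "y = 0")
      case False
      have "y0 \<bullet> (P *v y0) \<le> (y /\<^sub>R norm y) \<bullet> (P *v (y /\<^sub>R norm y))"
        using False by (intro min) simp
      also have "\<dots> = (y \<bullet> (P *v y)) / (norm y)\<^sup>2"
        by (simp add: matrix_vector_mult_scaleR power2_eq_square divide_inverse)
      finally show ?thesis using False by (simp add: field_simps)
    qed simp
  qed
qed

lemma compact_pd_ellipsoid:
  fixes P :: "real^'n^'n"
  assumes "pd P"
  shows "compact {\<xi>. (\<xi> - x0) \<bullet> (P *v (\<xi> - x0)) \<le> 1}" (is "compact ?E")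
proof -
  obtain l where l: "0 < l" "\<And>y. l * (norm y)\<^sup>2 \<le> y \<bullet> (P *v y)"
    using pd_quadratic_form_lower_bound[OF assms] by blast
  have "closed ?E"
    by (intro closed_Collect_le continuous_intros
        continuous_on_compose2[OF matrix_vector_mult_linear_continuous_on]) auto
  moreover have "?E \<subseteq> cball x0 (sqrt (1 / l))"
  proof
    fix \<xi> assume "\<xi> \<in> ?E"
    then have "(norm (\<xi> - x0))\<^sup>2 \<le> 1 / l"
      using l order_trans[OF l(2)] by (simp add: field_simps)
    then show "\<xi> \<in> cball x0 (sqrt (1 / l))"
      using real_le_rsqrt by (simp add: dist_norm norm_minus_commute)
  qed
  ultimately show ?thesis using bounded_subset[OF bounded_cball] compact_eq_bounded_closed by blast
qed

lemma invertible_if_pd: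
  fixes W :: "real^'n^'n"
  assumes "pd W"
  shows "invertible W"
proof -
  have "inj ((*v) W)"
  proof (rule injI)
    fix x y assume "W *v x = W *v y"
    then have "(x - y) \<bullet> (W *v (x - y)) = 0" by (simp add: matrix_vector_mult_diff_distrib)
    then show "x = y" using assms unfolding pd_def by (metis eq_iff_diff_eq_0 less_irrefl)
  qed
  then show ?thesis by (simp add: invertible_left_inverse matrix_left_invertible_injective)
qed

lemma matrix_mul_matrix_inv:
  assumes "invertible A"
  shows "A ** matrix_inv A = mat 1" and "matrix_inv A ** A = mat 1"
  using someI_ex[OF assms[unfolded invertible_def]] by (simp_all add: matrix_inv_def)

lemma pd_matrix_inv:
  fixes W :: "real^'n^'n"
  assumes "pd W"
  shows "pd (matrix_inv W)"
proof -
  have symW: "transpose W = W" using assms by (simp add: pd_def)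
  note inv = matrix_mul_matrix_inv[OF invertible_if_pd[OF assms]]
  have "transpose (matrix_inv W) ** W = mat 1"
    using inv(1) by (metis matrix_transpose_mul symW transpose_mat)
  then have "transpose (matrix_inv W) = matrix_inv W"
    by (metis inv(1) matrix_mul_assoc matrix_mul_lid matrix_mul_rid)
  moreover have "0 < y \<bullet> (matrix_inv W *v y)" if "y \<noteq> 0" for y
  proof -
    define z where "z = matrix_inv W *v y"
    have Wz: "W *v z = y" by (simp add: z_def matrix_vector_mul_assoc inv)
    then have "z \<noteq> 0" using that by auto
    then have "0 < z \<bullet> (W *v z)" using assms by (simp add: pd_def)
    then show ?thesis unfolding z_def[symmetric] using Wz by (simp add: inner_commute)
  qed
  ultimately show ?thesis by (simp add: pd_def)
qed

section \<open>Block matrices\<close>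

lemma sum_UNIV_plus_unit:
  fixes f :: "'n::finite + unit \<Rightarrow> 'a::comm_monoid_add"
  shows "(\<Sum>k\<in>UNIV. f k) = (\<Sum>k\<in>UNIV. f (Inl k)) + f (Inr ())"
  by (simp add: UNIV_Plus_UNIV[symmetric] sum.Plus UNIV_unit)

lemma block_mat_quadratic_form:
  fixes A :: "real^'n::finite^'n" and y :: "real^('n + unit)"
  assumes "\<And>k. z $ k = y $ Inl k" and "s = y $ Inr ()"
  shows "y \<bullet> (block_mat A b c *v y) = z \<bullet> (A *v z) + 2 * s * (b \<bullet> z) + c * s\<^sup>2"
  using assms
  by (simp add: inner_vec_def matrix_vector_mult_def block_mat_def sum_UNIV_plus_unit
      sum_distrib_left sum_distrib_right sum.distrib algebra_simps power2_eq_square)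

lemma psd_block_mat_iff:
  fixes A :: "real^'n::finite^'n"
  shows "psd (block_mat A b c) \<longleftrightarrow> psd A \<and> (\<forall>\<xi>. 0 \<le> \<xi> \<bullet> (A *v \<xi>) + 2 * (b \<bullet> \<xi>) + c)"
proof
  assume psd: "psd (block_mat A b c)"
  define embed :: "real^'n \<Rightarrow> real \<Rightarrow> real^('n + unit)"
    where "embed \<xi> s = (\<chi> i. case i of Inl k \<Rightarrow> \<xi> $ k | Inr _ \<Rightarrow> s)" for \<xi> s
  have form: "embed \<xi> s \<bullet> (block_mat A b c *v embed \<xi> s)
      = \<xi> \<bullet> (A *v \<xi>) + 2 * s * (b \<bullet> \<xi>) + c * s\<^sup>2" for \<xi> s
    by (rule block_mat_quadratic_form) (simp_all add: embed_def)
  have "A $ i $ j = A $ j $ i" for i j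
  proof -
    have "transpose (block_mat A b c) $ Inl i $ Inl j = block_mat A b c $ Inl i $ Inl j"
      using psd by (simp add: psd_def)
    then show ?thesis by (simp add: transpose_def block_mat_def)
  qed
  then have "transpose A = A" by (simp add: transpose_def vec_eq_iff)
  moreover have "0 \<le> \<xi> \<bullet> (A *v \<xi>) + 2 * s * (b \<bullet> \<xi>) + c * s\<^sup>2" for \<xi> s
    using psd form[of \<xi> s] unfolding psd_def by metis
  from this[of _ 0] this[of _ 1] show "psd A \<and> (\<forall>\<xi>. 0 \<le> \<xi> \<bullet> (A *v \<xi>) + 2 * (b \<bullet> \<xi>) + c)"
    using calculation by (simp add: psd_def)
next
  assume "psd A \<and> (\<forall>\<xi>. 0 \<le> \<xi> \<bullet> (A *v \<xi>) + 2 * (b \<bullet> \<xi>) + c)"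
  then have symA: "transpose A = A" and psdA: "\<And>z. 0 \<le> z \<bullet> (A *v z)"
    and nonneg: "\<And>\<xi>. 0 \<le> \<xi> \<bullet> (A *v \<xi>) + 2 * (b \<bullet> \<xi>) + c"
    by (auto simp: psd_def)
  have "A $ i $ j = A $ j $ i" for i j using symA by (metis transpose_def vec_lambda_beta)
  then have "transpose (block_mat A b c) = block_mat A b c"
    by (simp add: transpose_def block_mat_def vec_eq_iff split: sum.splits)
  moreover have "0 \<le> y \<bullet> (block_mat A b c *v y)" for y
  proof -
    define z :: "real^'n" where "z = (\<chi> k. y $ Inl k)"
    define s where "s = y $ Inr ()"
    have form: "y \<bullet> (block_mat A b c *v y) = z \<bullet> (A *v z) + 2 * s * (b \<bullet> z) + c * s\<^sup>2"
      by (rule block_mat_quadratic_form) (simp_all add: z_def s_def)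
    show ?thesis
    proof (cases "s = 0")
      case True
      then show ?thesis using form psdA[of z] by simp
    next
      case False
      have "0 \<le> (z /\<^sub>R s) \<bullet> (A *v (z /\<^sub>R s)) + 2 * (b \<bullet> (z /\<^sub>R s)) + c" by (rule nonneg)
      also have "\<dots> = (z \<bullet> (A *v z) + 2 * s * (b \<bullet> z) + c * s\<^sup>2) / s\<^sup>2"
        using False by (simp add: matrix_vector_mult_scaleR field_simps power2_eq_square)
      finally show ?thesis using form False by (simp add: zero_le_divide_iff)
    qed
  qed
  ultimately show "psd (block_mat A b c)" by (simp add: psd_def)
qed

section \<open>Trust-region optimality and the S-lemma\<close>

lemma nonneg_coeffs_if_eventually_nonneg_at_right:
  fixes a b :: real
  assumes "eventually (\<lambda>t. 0 \<le> t * a + t\<^sup>2 * b) (at_right 0)"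
  shows "0 \<le> a" and "a = 0 \<Longrightarrow> 0 \<le> b"
proof -
  have ev: "eventually (\<lambda>t. 0 < t \<and> 0 \<le> a + t * b) (at_right 0)"
    using assms eventually_at_right_less[of 0]
  proof eventually_elim
    case (elim t)
    moreover have "t * a + t\<^sup>2 * b = t * (a + t * b)" by (simp add: power2_eq_square algebra_simps)
    ultimately show ?case by (simp add: zero_le_mult_iff)
  qed
  have "((\<lambda>t. a + t * b) \<longlongrightarrow> a + 0 * b) (at_right 0)" by (intro tendsto_intros)
  then show "0 \<le> a" using ev by (intro tendsto_lowerbound) (auto elim: eventually_mono)
  assume "a = 0"
  then show "0 \<le> b"
    using eventually_happens'[OF trivial_limit_at_right_real ev] by (auto simp: zero_le_mult_iff)
qed

lemma quadratic_form_nonneg_if_nonneg_off_hyperplane: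
  fixes M :: "real^'n^'n"
  assumes "transpose M = M" and "p \<noteq> 0"
    and nonneg: "\<And>d. p \<bullet> d \<noteq> 0 \<Longrightarrow> 0 \<le> d \<bullet> (M *v d)"
  shows "0 \<le> d \<bullet> (M *v d)"
proof (cases "p \<bullet> d = 0")
  case True
  have "eventually (\<lambda>e. 0 \<le> d \<bullet> (M *v d) + 2 * e * ((M *v d) \<bullet> p) + e\<^sup>2 * (p \<bullet> (M *v p)))
      (at_right (0::real))"
    using eventually_at_right_less[of 0]
  proof eventually_elim
    case (elim e)
    then have "p \<bullet> (d + e *\<^sub>R p) \<noteq> 0" using True \<open>p \<noteq> 0\<close> by (simp add: inner_add_right)
    from nonneg[OF this] show ?case
      unfolding quadratic_form_add[OF assms(1)]
      by (simp add: matrix_vector_mult_scaleR power2_eq_square algebra_simps)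
  qed
  moreover have "((\<lambda>e. d \<bullet> (M *v d) + 2 * e * ((M *v d) \<bullet> p) + e\<^sup>2 * (p \<bullet> (M *v p)))
      \<longlongrightarrow> d \<bullet> (M *v d) + 2 * 0 * ((M *v d) \<bullet> p) + 0\<^sup>2 * (p \<bullet> (M *v p))) (at_right 0)"
    by (intro tendsto_intros)
  ultimately show ?thesis by (intro tendsto_lowerbound) auto
qed (rule nonneg)

lemma antiparallel_if_inner_nonneg_on_open_halfspace:
  fixes g p :: "'a::real_inner"
  assumes "p \<noteq> 0" and nonneg: "\<And>d. p \<bullet> d < 0 \<Longrightarrow> 0 \<le> g \<bullet> d"
  shows "\<exists>\<mu>\<ge>0. g = - \<mu> *\<^sub>R p"
proof -
  have pp: "0 < p \<bullet> p" using \<open>p \<noteq> 0\<close> by simp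
  define \<mu> where "\<mu> = - (g \<bullet> p) / (p \<bullet> p)"
  define w where "w = g + \<mu> *\<^sub>R p"
  have "0 \<le> - (g \<bullet> p)" using nonneg[of "- p"] pp by (simp add: inner_commute)
  from divide_nonneg_pos[OF this pp] have "0 \<le> \<mu>" by (simp add: \<mu>_def)
  have pw: "p \<bullet> w = 0"
    using pp by (simp add: w_def \<mu>_def inner_diff_right inner_commute)
  then have gw: "g \<bullet> w = w \<bullet> w" by (simp add: w_def inner_add_left)
  have "eventually (\<lambda>e. w \<bullet> w \<le> e * - (g \<bullet> p)) (at_right (0::real))"
    using eventually_at_right_less[of 0]
  proof eventually_elim
    case (elim e)
    then have "p \<bullet> (- w - e *\<^sub>R p) < 0" using pw pp by (simp add: inner_diff_right)
    from nonneg[OF this] show ?case using gw by (simp add: inner_diff_right inner_commute)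
  qed
  moreover have "((\<lambda>e. e * - (g \<bullet> p)) \<longlongrightarrow> 0 * - (g \<bullet> p)) (at_right 0)" by (intro tendsto_intros)
  ultimately have "w \<bullet> w \<le> 0" by (intro tendsto_lowerbound) auto
  then have "w = 0" by (metis inner_ge_zero inner_eq_zero_iff order_antisym)
  then have "g = - \<mu> *\<^sub>R p" by (simp add: w_def eq_neg_iff_add_eq_0)
  with \<open>0 \<le> \<mu>\<close> show ?thesis by blast
qed

text \<open>In the next three lemmas \<open>xs\<close> is a minimiser of \<open>q \<xi> = \<xi> \<bullet> (A *v \<xi>) + b \<bullet> \<xi> + c\<close> over the
  ellipsoid \<open>(\<xi> - x0) \<bullet> (P *v (\<xi> - x0)) \<le> 1\<close>, written in the increment \<open>d = \<xi> - xs\<close>: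
  \<open>s\<close> is the gauge value at \<open>xs\<close>, \<open>p = P *v (xs - x0)\<close> and \<open>g = 2 *\<^sub>R (A *v xs) + b\<close>.
  On the boundary the second-order condition holds in every direction \<open>d\<close> with \<open>p \<bullet> d \<noteq> 0\<close>
  because the chord from \<open>xs\<close> in direction \<open>d\<close> returns to the boundary at the step
  \<open>t = -2 (p \<bullet> d) / (d \<bullet> (P *v d))\<close>.\<close>

lemma trust_region_interior_optimality:
  fixes A P :: "real^'n^'n" and g p :: "real^'n"
  assumes "s < 1"
    and min: "\<And>d. s + 2 * (p \<bullet> d) + d \<bullet> (P *v d) \<le> 1 \<Longrightarrow> 0 \<le> g \<bullet> d + d \<bullet> (A *v d)"
  shows "g = 0" and "0 \<le> d \<bullet> (A *v d)"
proof -
  have ev: "eventually (\<lambda>t. 0 \<le> t * (g \<bullet> d) + t\<^sup>2 * (d \<bullet> (A *v d))) (at_right 0)" for d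
  proof -
    have "((\<lambda>t. s + t * (2 * (p \<bullet> d)) + t\<^sup>2 * (d \<bullet> (P *v d)))
        \<longlongrightarrow> s + 0 * (2 * (p \<bullet> d)) + 0\<^sup>2 * (d \<bullet> (P *v d))) (at_right 0)"
      by (intro tendsto_intros)
    then have "eventually (\<lambda>t. s + t * (2 * (p \<bullet> d)) + t\<^sup>2 * (d \<bullet> (P *v d)) < 1) (at_right 0)"
      using \<open>s < 1\<close> by (intro order_tendstoD(2)) auto
    then show ?thesis
    proof eventually_elim
      case (elim t)
      then show ?case
        using min[of "t *\<^sub>R d"] by (simp add: matrix_vector_mult_scaleR power2_eq_square)
    qed
  qed
  from nonneg_coeffs_if_eventually_nonneg_at_right(1)[OF ev[of "- g"]] have "g \<bullet> g \<le> 0" by simp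
  then show "g = 0" by (metis inner_gt_zero_iff not_le)
  with nonneg_coeffs_if_eventually_nonneg_at_right(2)[OF ev[of d]] show "0 \<le> d \<bullet> (A *v d)" by simp
qed

lemma trust_region_boundary_optimality:
  fixes A P :: "real^'n^'n" and g p :: "real^'n"
  assumes symA: "transpose A = A" and "pd P" and "p \<noteq> 0"
    and min: "\<And>d. 1 + 2 * (p \<bullet> d) + d \<bullet> (P *v d) \<le> 1 \<Longrightarrow> 0 \<le> g \<bullet> d + d \<bullet> (A *v d)"
  shows "\<exists>\<nu>\<ge>0. g = - (2 * \<nu>) *\<^sub>R p \<and> psd (A + \<nu> *\<^sub>R P)"
proof -
  have symP: "transpose P = P" using \<open>pd P\<close> by (simp add: pd_def)
  have "0 \<le> g \<bullet> d" if "p \<bullet> d < 0" for d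
  proof (rule nonneg_coeffs_if_eventually_nonneg_at_right(1))
    have "((\<lambda>t. 2 * (p \<bullet> d) + t * (d \<bullet> (P *v d))) \<longlongrightarrow> 2 * (p \<bullet> d) + 0 * (d \<bullet> (P *v d)))
        (at_right 0)"
      by (intro tendsto_intros)
    from order_tendstoD(2)[OF this, of 0]
    have "eventually (\<lambda>t. 2 * (p \<bullet> d) + t * (d \<bullet> (P *v d)) < 0) (at_right 0)"
      using that by simp
    with eventually_at_right_less[of 0]
    show "eventually (\<lambda>t. 0 \<le> t * (g \<bullet> d) + t\<^sup>2 * (d \<bullet> (A *v d))) (at_right 0)"
    proof eventually_elim
      case (elim t)
      then have "t * (2 * (p \<bullet> d) + t * (d \<bullet> (P *v d))) \<le> 0" by (simp add: mult_pos_neg less_imp_le)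
      then show ?case
        using min[of "t *\<^sub>R d"]
        by (simp add: matrix_vector_mult_scaleR power2_eq_square algebra_simps)
    qed
  qed
  then obtain \<mu> where "0 \<le> \<mu>" and g: "g = - \<mu> *\<^sub>R p"
    using antiparallel_if_inner_nonneg_on_open_halfspace[OF \<open>p \<noteq> 0\<close>] by blast
  define \<nu> where "\<nu> = \<mu> / 2"
  have symM: "transpose (A + \<nu> *\<^sub>R P) = A + \<nu> *\<^sub>R P"
    using symA symP by (simp add: transpose_add transpose_scalar)
  have "0 \<le> d \<bullet> ((A + \<nu> *\<^sub>R P) *v d)" for d
  proof (rule quadratic_form_nonneg_if_nonneg_off_hyperplane[OF symM \<open>p \<noteq> 0\<close>])
    fix d assume pd0: "p \<bullet> d \<noteq> 0"
    then have "d \<noteq> 0" by auto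
    then have dPd: "0 < d \<bullet> (P *v d)" using \<open>pd P\<close> by (simp add: pd_def)
    define t where "t = - 2 * (p \<bullet> d) / (d \<bullet> (P *v d))"
    have tt: "t * (d \<bullet> (P *v d)) = - 2 * (p \<bullet> d)" using dPd by (simp add: t_def)
    have "t \<noteq> 0" using pd0 dPd by (simp add: t_def)
    have "0 \<le> t * (g \<bullet> d) + t\<^sup>2 * (d \<bullet> (A *v d))"
      using min[of "t *\<^sub>R d"] tt
      by (simp add: matrix_vector_mult_scaleR power2_eq_square algebra_simps)
    also have "t * (g \<bullet> d) = t\<^sup>2 * (\<nu> * (d \<bullet> (P *v d)))"
      using tt by (simp add: g \<nu>_def power2_eq_square algebra_simps)
    finally have "0 \<le> t\<^sup>2 * (d \<bullet> ((A + \<nu> *\<^sub>R P) *v d))"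
      unfolding quadratic_form_add_matrix by (simp add: algebra_simps)
    then show "0 \<le> d \<bullet> ((A + \<nu> *\<^sub>R P) *v d)" using \<open>t \<noteq> 0\<close> by (simp add: zero_le_mult_iff)
  qed
  with symM \<open>0 \<le> \<mu>\<close> show ?thesis by (intro exI[of _ \<nu>]) (simp add: psd_def g \<nu>_def)
qed

lemma trust_region_optimality:
  fixes A P :: "real^'n^'n" and g p :: "real^'n"
  assumes "transpose A = A" and "pd P" and "s \<le> 1" and "s = 1 \<Longrightarrow> p \<noteq> 0"
    and min: "\<And>d. s + 2 * (p \<bullet> d) + d \<bullet> (P *v d) \<le> 1 \<Longrightarrow> 0 \<le> g \<bullet> d + d \<bullet> (A *v d)"
  shows "\<exists>\<nu>\<ge>0. g + (2 * \<nu>) *\<^sub>R p = 0 \<and> \<nu> * (s - 1) = 0 \<and> psd (A + \<nu> *\<^sub>R P)"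
proof (cases "s < 1")
  case True
  with trust_region_interior_optimality[of s p P g A, OF _ min] \<open>transpose A = A\<close>
  show ?thesis by (intro exI[of _ 0]) (simp add: psd_def)
next
  case False
  with \<open>s \<le> 1\<close> have "s = 1" by simp
  with trust_region_boundary_optimality[OF assms(1,2)] assms(4) min show ?thesis by force
qed

lemma S_lemma_ellipsoid:
  fixes A P :: "real^'n^'n" and b x0 :: "real^'n" and c :: real
  assumes symA: "transpose A = A" and "pd P"
  shows "(\<forall>\<xi>. (\<xi> - x0) \<bullet> (P *v (\<xi> - x0)) \<le> 1 \<longrightarrow> 0 \<le> \<xi> \<bullet> (A *v \<xi>) + b \<bullet> \<xi> + c)
    \<longleftrightarrow> (\<exists>\<nu>\<ge>0. psd (A + \<nu> *\<^sub>R P) \<and>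
          (\<forall>\<xi>. 0 \<le> \<xi> \<bullet> (A *v \<xi>) + b \<bullet> \<xi> + c + \<nu> * ((\<xi> - x0) \<bullet> (P *v (\<xi> - x0)) - 1)))"
    (is "(\<forall>\<xi>. ?gauge \<xi> \<le> 1 \<longrightarrow> 0 \<le> ?q \<xi>) \<longleftrightarrow> _")
proof
  assume "\<exists>\<nu>\<ge>0. psd (A + \<nu> *\<^sub>R P) \<and> (\<forall>\<xi>. 0 \<le> ?q \<xi> + \<nu> * (?gauge \<xi> - 1))"
  then obtain \<nu> where "0 \<le> \<nu>" and global: "\<And>\<xi>. 0 \<le> ?q \<xi> + \<nu> * (?gauge \<xi> - 1)" by blast
  show "\<forall>\<xi>. ?gauge \<xi> \<le> 1 \<longrightarrow> 0 \<le> ?q \<xi>"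
  proof (intro allI impI)
    fix \<xi> assume "?gauge \<xi> \<le> 1"
    with \<open>0 \<le> \<nu>\<close> have "\<nu> * (?gauge \<xi> - 1) \<le> 0" by (simp add: mult_nonneg_nonpos)
    with global[of \<xi>] show "0 \<le> ?q \<xi>" by linarith
  qed
next
  assume nonneg: "\<forall>\<xi>. ?gauge \<xi> \<le> 1 \<longrightarrow> 0 \<le> ?q \<xi>"
  have symP: "transpose P = P" using \<open>pd P\<close> by (simp add: pd_def)
  have "continuous_on {\<xi>. ?gauge \<xi> \<le> 1} ?q"
    by (intro continuous_intros matrix_vector_mult_linear_continuous_on)
  moreover have "?gauge x0 \<le> 1" by simp
  ultimately obtain xs where "?gauge xs \<le> 1" and min: "\<And>\<xi>. ?gauge \<xi> \<le> 1 \<Longrightarrow> ?q xs \<le> ?q \<xi>"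
    using continuous_attains_inf[OF compact_pd_ellipsoid[OF \<open>pd P\<close>]] by blast
  define p where "p = P *v (xs - x0)"
  define g where "g = 2 *\<^sub>R (A *v xs) + b"
  have gauge_add: "?gauge (xs + d) = ?gauge xs + 2 * (p \<bullet> d) + d \<bullet> (P *v d)" for d
    using quadratic_form_add[OF symP, of "xs - x0" d] by (simp add: p_def algebra_simps)
  have q_add: "?q (xs + d) = ?q xs + g \<bullet> d + d \<bullet> (A *v d)" for d
    using quadratic_form_add[OF symA, of xs d] by (simp add: g_def inner_add_left inner_add_right)
  have "p \<noteq> 0" if "?gauge xs = 1"
    using that by (auto simp: p_def)
  moreover have "0 \<le> g \<bullet> d + d \<bullet> (A *v d)" if "?gauge xs + 2 * (p \<bullet> d) + d \<bullet> (P *v d) \<le> 1" for d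
    using min[of "xs + d"] that by (simp add: gauge_add q_add)
  ultimately obtain \<nu> where "0 \<le> \<nu>" and stat: "g + (2 * \<nu>) *\<^sub>R p = 0"
    and slack: "\<nu> * (?gauge xs - 1) = 0" and psd: "psd (A + \<nu> *\<^sub>R P)"
    using trust_region_optimality[OF symA \<open>pd P\<close> \<open>?gauge xs \<le> 1\<close>] by blast
  have "0 \<le> ?q \<xi> + \<nu> * (?gauge \<xi> - 1)" for \<xi>
  proof -
    define d where "d = \<xi> - xs"
    have \<xi>: "\<xi> = xs + d" by (simp add: d_def)
    have "?q \<xi> + \<nu> * (?gauge \<xi> - 1)
        = ?q xs + \<nu> * (?gauge xs - 1) + (g + (2 * \<nu>) *\<^sub>R p) \<bullet> d + d \<bullet> ((A + \<nu> *\<^sub>R P) *v d)"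
      unfolding \<xi> gauge_add q_add quadratic_form_add_matrix
      by (simp add: inner_add_left algebra_simps)
    also have "\<dots> = ?q xs + d \<bullet> ((A + \<nu> *\<^sub>R P) *v d)" using stat slack by simp
    moreover have "0 \<le> ?q xs" using nonneg \<open>?gauge xs \<le> 1\<close> by blast
    moreover have "0 \<le> d \<bullet> ((A + \<nu> *\<^sub>R P) *v d)" using psd by (simp add: psd_def)
    ultimately show ?thesis by linarith
  qed
  with \<open>0 \<le> \<nu>\<close> psd show "\<exists>\<nu>\<ge>0. psd (A + \<nu> *\<^sub>R P) \<and> (\<forall>\<xi>. 0 \<le> ?q \<xi> + \<nu> * (?gauge \<xi> - 1))"
    by blast
qed

section \<open>The robust constraint\<close>

lemma block_quadratic_eq_ellipsoid_lagrangian: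
  fixes A P :: "real^'n^'n"
  assumes "transpose P = P"
  shows "\<xi> \<bullet> ((A + \<nu> *\<^sub>R P) *v \<xi>) + 2 * (- (1/2) *\<^sub>R ((2 * \<nu>) *\<^sub>R (P *v x0) + v - R) \<bullet> \<xi>)
      + (u + \<nu> * (x0 \<bullet> (P *v x0)) - \<nu>)
    = \<xi> \<bullet> (A *v \<xi>) + (R - v) \<bullet> \<xi> + u + \<nu> * ((\<xi> - x0) \<bullet> (P *v (\<xi> - x0)) - 1)"
proof -
  have "(\<xi> - x0) \<bullet> (P *v (\<xi> - x0)) = \<xi> \<bullet> (P *v \<xi>) - 2 * ((P *v x0) \<bullet> \<xi>) + x0 \<bullet> (P *v x0)"
    using inner_matrix_vector_symmetric[OF assms, of x0 \<xi>]
    by (simp add: matrix_vector_mult_diff_distrib inner_diff_left inner_diff_right inner_commute)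
  then show ?thesis
    unfolding quadratic_form_add_matrix by (simp add: inner_add_left inner_diff_left algebra_simps)
qed

lemma SUP_ellipsoid_le_iff_psd_block_mat:
  fixes A W :: "real^'n^'n" and v R \<xi>0 :: "real^'n" and H u :: real
  assumes "pd W" and symA: "transpose A = A"
  shows "(SUP \<xi>\<in>ellipsoid \<xi>0 W. v \<bullet> \<xi> - (\<xi> \<bullet> (A *v \<xi>) + R \<bullet> \<xi> + H)) \<le> u - H \<longleftrightarrow>
    (\<exists>\<nu>\<ge>0. psd (block_mat (A + \<nu> *\<^sub>R matrix_inv W)
        (- (1/2) *\<^sub>R ((2 * \<nu>) *\<^sub>R (matrix_inv W *v \<xi>0) + v - R))
        (u + \<nu> * (\<xi>0 \<bullet> (matrix_inv W *v \<xi>0)) - \<nu>)))"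
proof -
  define P where "P = matrix_inv W"
  have "pd P" using pd_matrix_inv[OF \<open>pd W\<close>] by (simp add: P_def)
  then have symP: "transpose P = P" by (simp add: pd_def)
  have E: "ellipsoid \<xi>0 W = {\<xi>. (\<xi> - \<xi>0) \<bullet> (P *v (\<xi> - \<xi>0)) \<le> 1}"
    by (simp add: ellipsoid_def P_def)
  have "\<xi>0 \<in> ellipsoid \<xi>0 W" by (simp add: E)
  then have ne: "ellipsoid \<xi>0 W \<noteq> {}" by blast
  have bdd: "bdd_above ((\<lambda>\<xi>. v \<bullet> \<xi> - (\<xi> \<bullet> (A *v \<xi>) + R \<bullet> \<xi> + H)) ` ellipsoid \<xi>0 W)"
    unfolding E
    by (intro bounded_imp_bdd_above compact_imp_bounded compact_continuous_image
        compact_pd_ellipsoid[OF \<open>pd P\<close>] continuous_intros matrix_vector_mult_linear_continuous_on)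
  have "v \<bullet> \<xi> - (\<xi> \<bullet> (A *v \<xi>) + R \<bullet> \<xi> + H) \<le> u - H \<longleftrightarrow> 0 \<le> \<xi> \<bullet> (A *v \<xi>) + (R - v) \<bullet> \<xi> + u"
    for \<xi> by (auto simp: inner_diff_left)
  then have "(SUP \<xi>\<in>ellipsoid \<xi>0 W. v \<bullet> \<xi> - (\<xi> \<bullet> (A *v \<xi>) + R \<bullet> \<xi> + H)) \<le> u - H \<longleftrightarrow>
      (\<forall>\<xi>. (\<xi> - \<xi>0) \<bullet> (P *v (\<xi> - \<xi>0)) \<le> 1 \<longrightarrow> 0 \<le> \<xi> \<bullet> (A *v \<xi>) + (R - v) \<bullet> \<xi> + u)"
    unfolding cSUP_le_iff[OF ne bdd] by (simp add: E)
  also have "\<dots> \<longleftrightarrow> (\<exists>\<nu>\<ge>0. psd (A + \<nu> *\<^sub>R P) \<and> (\<forall>\<xi>. 0 \<le> \<xi> \<bullet> (A *v \<xi>) + (R - v) \<bullet> \<xi> + u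
      + \<nu> * ((\<xi> - \<xi>0) \<bullet> (P *v (\<xi> - \<xi>0)) - 1)))"
    by (rule S_lemma_ellipsoid[OF symA \<open>pd P\<close>])
  also have "\<dots> \<longleftrightarrow> (\<exists>\<nu>\<ge>0. psd (block_mat (A + \<nu> *\<^sub>R P)
        (- (1/2) *\<^sub>R ((2 * \<nu>) *\<^sub>R (P *v \<xi>0) + v - R)) (u + \<nu> * (\<xi>0 \<bullet> (P *v \<xi>0)) - \<nu>)))"
    by (simp only: psd_block_mat_iff block_quadratic_eq_ellipsoid_lagrangian[OF symP])
  finally show ?thesis by (simp add: P_def)
qed

lemma fobj_eq_quadratic:
  "fobj Wc r h t x \<xi> = \<xi> \<bullet> (Wt Wc t x *v \<xi>) + Rt r t x \<bullet> \<xi> + Ht h t x"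
  unfolding fobj_def Wt_def Rt_def Ht_def wcomp_def
  by (simp add: sum_matrix_vector_mult inner_sum_right inner_sum_left sum.distrib algebra_simps
      flip: scaleR_matrix_vector_assoc)

lemma SUP_ellipsoid_fobj_le_iff_psd_block_mat:
  assumes "pd W" and "\<forall>j. psd (Wc t j)"
  shows "(SUP \<xi>\<in>ellipsoid \<xi>0 W. v \<bullet> \<xi> - fobj Wc r h t x \<xi>) \<le> u - Ht h t x \<longleftrightarrow>
    (\<exists>\<nu>\<ge>0. psd (block_mat (Wt Wc t x + \<nu> *\<^sub>R matrix_inv W)
        (- (1/2) *\<^sub>R ((2 * \<nu>) *\<^sub>R (matrix_inv W *v \<xi>0) + v - Rt r t x))
        (u + \<nu> * (\<xi>0 \<bullet> (matrix_inv W *v \<xi>0)) - \<nu>)))"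
proof -
  have "transpose (Wt Wc t x) = Wt Wc t x"
    using assms(2) by (simp add: Wt_def psd_def transpose_sum transpose_scalar)
  then show ?thesis
    unfolding fobj_eq_quadratic by (rule SUP_ellipsoid_le_iff_psd_block_mat[OF assms(1)])
qed

theorem proposition4:
  fixes \<epsilon> \<delta> :: real and N T :: nat
    and nrm :: "real^'m::finite \<Rightarrow> real"
    and \<zeta> :: "nat \<Rightarrow> real^'m"
    and \<xi>0 :: "real^'m" and W :: "real^'m^'m"
    and Wc :: "nat \<Rightarrow> 'n::finite \<Rightarrow> real^'m^'m"
    and r :: "nat \<Rightarrow> 'n \<Rightarrow> real^'m" and h :: "nat \<Rightarrow> 'n \<Rightarrow> real"
  assumes "0 < \<epsilon>" "\<epsilon> < 1" "0 < \<delta>"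
    and "is_norm nrm"
    and "pd W"
    and "\<forall>i\<in>{1..N}. \<zeta> i \<in> ellipsoid \<xi>0 W"
    and "\<forall>t\<in>{1..T}. \<forall>j. psd (Wc t j)"
  shows
   "{x :: real^'n. \<exists>(\<alpha>::nat \<Rightarrow> real) (q::nat \<Rightarrow> nat \<Rightarrow> real) (v::nat \<Rightarrow> nat \<Rightarrow> real^'m).
       \<forall>i\<in>{1..N}. \<forall>t\<in>{1..T}.
         0 < \<alpha> t \<and> 0 \<le> q i t
       \<and> dual_norm nrm (v i t) * \<delta> + (1 / real N) * (\<Sum>j=1..N. q j t) \<le> \<epsilon> * \<alpha> t
       \<and> (SUP \<xi>\<in>ellipsoid \<xi>0 W. v i t \<bullet> \<xi> - fobj Wc r h t x \<xi>) + \<alpha> t - v i t \<bullet> \<zeta> i - q i t \<le> 0}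
  = {x :: real^'n. \<exists>(\<alpha>::nat \<Rightarrow> real) (q::nat \<Rightarrow> nat \<Rightarrow> real) (v::nat \<Rightarrow> nat \<Rightarrow> real^'m)
                     (u::nat \<Rightarrow> nat \<Rightarrow> real) (\<nu>::nat \<Rightarrow> nat \<Rightarrow> real).
       \<forall>i\<in>{1..N}. \<forall>t\<in>{1..T}.
         0 < \<alpha> t \<and> 0 \<le> q i t \<and> 0 \<le> \<nu> i t
       \<and> dual_norm nrm (v i t) * \<delta> + (1 / real N) * (\<Sum>j=1..N. q j t) \<le> \<epsilon> * \<alpha> t
       \<and> u i t - Ht h t x + \<alpha> t - v i t \<bullet> \<zeta> i \<le> q i t
       \<and> psd (block_mat
               (Wt Wc t x + \<nu> i t *\<^sub>R matrix_inv W)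
               (- (1/2) *\<^sub>R ((2 * \<nu> i t) *\<^sub>R (matrix_inv W *v \<xi>0) + v i t - Rt r t x))
               (u i t + \<nu> i t * (\<xi>0 \<bullet> (matrix_inv W *v \<xi>0)) - \<nu> i t))}"
  (is "{x. \<exists>\<alpha> q v. \<forall>i\<in>{1..N}. \<forall>t\<in>{1..T}. ?L x \<alpha> q v i t}
     = {x. \<exists>\<alpha> q v u \<nu>. \<forall>i\<in>{1..N}. \<forall>t\<in>{1..T}. ?R x \<alpha> q v u \<nu> i t}")
proof -
  have robust: "(SUP \<xi>\<in>ellipsoid \<xi>0 W. v \<bullet> \<xi> - fobj Wc r h t x \<xi>) \<le> u - Ht h t x \<longleftrightarrow>
      (\<exists>\<nu>\<ge>0. psd (block_mat (Wt Wc t x + \<nu> *\<^sub>R matrix_inv W)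
        (- (1/2) *\<^sub>R ((2 * \<nu>) *\<^sub>R (matrix_inv W *v \<xi>0) + v - Rt r t x))
        (u + \<nu> * (\<xi>0 \<bullet> (matrix_inv W *v \<xi>0)) - \<nu>)))" if "t \<in> {1..T}" for t x v u
    using SUP_ellipsoid_fobj_le_iff_psd_block_mat[OF \<open>pd W\<close>] assms(7) that by blast
  show ?thesis
  proof (intro set_eqI iffI CollectI; elim CollectE exE)
    fix x \<alpha> q v
    assume L: "\<forall>i\<in>{1..N}. \<forall>t\<in>{1..T}. ?L x \<alpha> q v i t"
    define u
      where "u i t = (SUP \<xi>\<in>ellipsoid \<xi>0 W. v i t \<bullet> \<xi> - fobj Wc r h t x \<xi>) + Ht h t x" for i t
    have "\<forall>i\<in>{1..N}. \<forall>t\<in>{1..T}. \<exists>\<nu>. ?R x \<alpha> q v u (\<lambda>_ _. \<nu>) i t"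
    proof (intro ballI)
      fix i t assume i: "i \<in> {1..N}" and t: "t \<in> {1..T}"
      show "\<exists>\<nu>. ?R x \<alpha> q v u (\<lambda>_ _. \<nu>) i t"
        using L[rule_format, OF i t] robust[OF t, where x = x and v = "v i t" and u = "u i t"]
        by (simp add: u_def)
    qed
    \<comment> \<open>\<open>?R\<close> reads \<open>\<nu>\<close> only at \<open>(i, t)\<close>, so choice assembles the pointwise multipliers\<close>
    then obtain \<nu> where "\<forall>i\<in>{1..N}. \<forall>t\<in>{1..T}. ?R x \<alpha> q v u \<nu> i t" by metis
    then show "\<exists>\<alpha> q v u \<nu>. \<forall>i\<in>{1..N}. \<forall>t\<in>{1..T}. ?R x \<alpha> q v u \<nu> i t" by blast
  next
    fix x \<alpha> q v u \<nu>
    assume R: "\<forall>i\<in>{1..N}. \<forall>t\<in>{1..T}. ?R x \<alpha> q v u \<nu> i t"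
    have "?L x \<alpha> q v i t" if i: "i \<in> {1..N}" and t: "t \<in> {1..T}" for i t
    proof -
      have "(SUP \<xi>\<in>ellipsoid \<xi>0 W. v i t \<bullet> \<xi> - fobj Wc r h t x \<xi>) \<le> u i t - Ht h t x"
        using R[rule_format, OF i t] robust[OF t, where x = x and v = "v i t" and u = "u i t"]
        by blast
      with R[rule_format, OF i t] show ?thesis by auto
    qed
    then show "\<exists>\<alpha> q v. \<forall>i\<in>{1..N}. \<forall>t\<in>{1..T}. ?L x \<alpha> q v i t" by blast
  qed
qed

end
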